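(* Let $X$ be a real-valued Lévy process and $\alpha>0$ such that $Ee^{\alpha X_1}=1$ and $E(X_1e^{\alpha X_1})<\infty$. Let $B(T)=\int_{[0,T)}e^{\psi(\alpha)(T-t)}Ee^{\alpha\overline X_t}\,dt$, where $\psi(\alpha)=\ln Ee^{\alpha X_1}$ and $\overline X_t=\sup_{s\le t}X_s$. Then for every fixed $t\ge0$, $$\lim_{T\to\infty}\frac{B(T-t)}{B(T)}=1.$$ *)

theory Defs
  imports "HOL-Probability.Probability"
begin

text \<open>A real-valued Levy process on the probability space M, indexed by times t \<ge> 0:
  measurable coordinates, X 0 = 0, independent increments, stationary increments,
  and cadlag sample paths (we take the standard cadlag version, so paths are cadlag
  for every sample point).\<close>

definition levy_process :: "'a measure \<Rightarrow> (real \<Rightarrow> 'a \<Rightarrow> real) \<Rightarrow> bool" where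
  "levy_process M X \<longleftrightarrow>
     prob_space M \<and>
     (\<forall>t\<ge>0. X t \<in> borel_measurable M) \<and>
     (\<forall>\<omega>\<in>space M. X 0 \<omega> = 0) \<and>
     (\<forall>(ts :: nat \<Rightarrow> real) n. 0 \<le> ts 0 \<and> (\<forall>i<n. ts i \<le> ts (Suc i)) \<longrightarrow>
        prob_space.indep_vars M (\<lambda>_. borel) (\<lambda>i \<omega>. X (ts (Suc i)) \<omega> - X (ts i) \<omega>) {..<n}) \<and>
     (\<forall>s t. 0 \<le> s \<longrightarrow> 0 \<le> t \<longrightarrow>
        distr M borel (\<lambda>\<omega>. X (s + t) \<omega> - X s \<omega>) = distr M borel (X t)) \<and>
     (\<forall>\<omega>\<in>space M. \<forall>t\<ge>0.
        continuous (at_right t) (\<lambda>s. X s \<omega>) \<and>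
        (0 < t \<longrightarrow> (\<exists>l. ((\<lambda>s. X s \<omega>) \<longlongrightarrow> l) (at_left t))))"

definition running_sup :: "(real \<Rightarrow> 'a \<Rightarrow> real) \<Rightarrow> real \<Rightarrow> 'a \<Rightarrow> real" where
  "running_sup X t \<omega> = Sup ((\<lambda>s. X s \<omega>) ` {0..t})"

definition levy_psi :: "'a measure \<Rightarrow> (real \<Rightarrow> 'a \<Rightarrow> real) \<Rightarrow> real \<Rightarrow> real" where
  "levy_psi M X a = ln (integral\<^sup>L M (\<lambda>\<omega>. exp (a * X 1 \<omega>)))"

definition levy_B :: "'a measure \<Rightarrow> (real \<Rightarrow> 'a \<Rightarrow> real) \<Rightarrow> real \<Rightarrow> real \<Rightarrow> real" where
  "levy_B M X a T = (LINT t:{0..<T}|lborel.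
      exp (levy_psi M X a * (T - t)) * integral\<^sup>L M (\<lambda>\<omega>. exp (a * running_sup X t \<omega>)))"

end

theory Submission
  imports Defs
begin

text \<open>Since \<open>E exp (\<alpha> X 1) = 1\<close>, \<open>\<psi>(\<alpha>) = 0\<close> and \<open>B(T)\<close> is the integral over \<open>[0, T)\<close> of
  \<open>g(s) = E exp (\<alpha> sup{X r | r \<le> s})\<close>, a nondecreasing function with \<open>g \<ge> 1\<close>.
  The process \<open>exp (\<alpha> X t)\<close> is a mean-one martingale, so Doob's \<open>L log L\<close> maximal inequality,
  applied along dyadic skeletons and passed to the limit by right-continuity of the paths,
  gives \<open>g(b) \<le> \<kappa> (1 + b)\<close>, the linear growth coming from
  \<open>E [X b exp (\<alpha> X b)] = b E [X 1 exp (\<alpha> X 1)]\<close>. Splitting the supremum over \<open>[0, a + b]\<close>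
  at time \<open>a\<close> and using independence of increments yields \<open>g(a + b) \<le> \<kappa> (1 + b) g(a)\<close>.
  Hence the integral of \<open>g\<close> over \<open>[0, T)\<close> is at least the sum of \<open>g(T) / (\<kappa> (T + 2 - k))\<close> over \<open>k < T\<close>, of
  order \<open>g(T) log T / \<kappa>\<close>, while the integral over \<open>[T - t, T)\<close> is at most \<open>t g(T)\<close>; so
  \<open>B(T - t) / B(T) \<rightarrow> 1\<close>.\<close>

section \<open>Running maxima\<close>

primrec run_max :: "(nat \<Rightarrow> real) \<Rightarrow> nat \<Rightarrow> real" where
  "run_max f 0 = f 0"
| "run_max f (Suc k) = max (run_max f k) (f (Suc k))"

lemma run_max_ge: "j \<le> k \<Longrightarrow> f j \<le> run_max f k"
  by (induction k) (auto simp: le_Suc_eq max.coboundedI1)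

lemma run_max_le: "(\<And>j. j \<le> k \<Longrightarrow> f j \<le> B) \<Longrightarrow> run_max f k \<le> B"
  by (induction k) auto

lemma run_max_cong: "(\<And>j. j \<le> k \<Longrightarrow> f j = g j) \<Longrightarrow> run_max f k = run_max g k"
  by (induction k) auto

lemma run_max_mono_comp: "mono g \<Longrightarrow> g (run_max f k) = run_max (\<lambda>j. g (f j)) k"
  by (induction k) (simp_all add: max_of_mono[symmetric])

lemma run_max_exp: "0 \<le> a \<Longrightarrow> exp (a * run_max f k) = run_max (\<lambda>j. exp (a * f j)) k"
  by (rule run_max_mono_comp) (auto intro!: monoI mult_left_mono)

lemma run_max_add_le: "run_max f (p + q) \<le> run_max f p + run_max (\<lambda>j. f (p + j) - f p) q"
proof (rule run_max_le)
  fix k assume k: "k \<le> p + q"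
  have "f p \<le> run_max f p" "0 \<le> run_max (\<lambda>j. f (p + j) - f p) q"
    using run_max_ge[of 0 q "\<lambda>j. f (p + j) - f p"] by (auto intro: run_max_ge)
  moreover have "f (p + (k - p)) - f p \<le> run_max (\<lambda>j. f (p + j) - f p) q" if "p < k"
    using k run_max_ge[of "k - p" q "\<lambda>j. f (p + j) - f p"] by simp
  ultimately show "f k \<le> run_max f p + run_max (\<lambda>j. f (p + j) - f p) q"
    using run_max_ge[of k p f] by (cases "k \<le> p") (auto simp: not_le)
qed

lemma measurable_run_max [measurable]:
  "(\<And>j. j \<le> k \<Longrightarrow> (\<lambda>x. f j x) \<in> borel_measurable N) \<Longrightarrow>
    (\<lambda>x. run_max (\<lambda>j. f j x) k) \<in> borel_measurable N"
  by (induction k) auto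

lemma integrable_run_max:
  fixes f :: "nat \<Rightarrow> 'b \<Rightarrow> real"
  shows "(\<And>j. j \<le> k \<Longrightarrow> integrable N (f j)) \<Longrightarrow> integrable N (\<lambda>x. run_max (\<lambda>j. f j x) k)"
  by (induction k) auto

section \<open>A pathwise \<open>L log L\<close> inequality\<close>

definition xlogx_plus :: "real \<Rightarrow> real" where
  "xlogx_plus x = x * max (ln x) 0"

lemma borel_measurable_xlogx_plus [measurable]: "xlogx_plus \<in> borel_measurable borel"
  unfolding xlogx_plus_def by measurable

lemma xlogx_plus_exp_le: "xlogx_plus (exp u) \<le> u * exp u + exp (-1)"
proof (cases "u \<ge> 0")
  case False
  have "exp (-1) = exp (-1 - u) * exp u" by (simp flip: exp_add)
  also have "\<dots> \<ge> (1 + (-1 - u)) * exp u"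
    by (intro mult_right_mono exp_ge_add_one_self) auto
  finally show ?thesis using False by (simp add: xlogx_plus_def)
qed (simp add: xlogx_plus_def mult.commute)

lemma abs_xlogx_plus_exp_le: "\<bar>xlogx_plus (exp u)\<bar> \<le> \<bar>u * exp u\<bar>"
  by (auto simp: xlogx_plus_def abs_mult max_def)

lemma min_diff_le_mult_min_ln_diff:
  fixes a b L :: real
  assumes b: "0 < b" "b \<le> a"
  shows "min a (exp L) - min b (exp L) \<le> a * (min (ln a) L - min (ln b) L)"
proof -
  have gap: "v - u \<le> v * (ln v - ln u)" if "0 < u" "u \<le> v" for u v :: real
  proof -
    have "v * ln (u / v) \<le> v * (u / v - 1)"
      using that by (intro mult_left_mono ln_le_minus_one) auto
    then show ?thesis using that by (simp add: ln_div algebra_simps)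
  qed
  have le_exp: "x \<le> exp L \<longleftrightarrow> ln x \<le> L" if "0 < x" for x
    using ln_le_cancel_iff[of x "exp L"] that by simp
  consider "a \<le> exp L" | "b \<le> exp L" "exp L < a" | "exp L < b"
    using b by linarith
  then show ?thesis
  proof cases
    case 1
    then show ?thesis using b gap[OF b] le_exp[of a] le_exp[of b] by simp
  next
    case 2
    have "exp L - b \<le> exp L * (L - ln b)" using gap[OF b(1) 2(1)] by simp
    also have "\<dots> \<le> a * (L - ln b)"
      using 2 b le_exp[of b] by (intro mult_right_mono) auto
    finally show ?thesis using 2 b le_exp[of a] le_exp[of b] by simp
  qed (use b le_exp[of a] le_exp[of b] in simp)
qed

lemma truncated_run_max_telescope:
  fixes x :: "nat \<Rightarrow> real"
  assumes pos: "\<And>k. x k > 0" and x0: "x 0 = 1" and L: "L \<ge> 0"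
  shows "min (run_max x N) (exp L) - 1 \<le> x N * min (ln (run_max x N)) L
           - (\<Sum>t<N. min (ln (run_max x t)) L * (x (Suc t) - x t))"
proof (induction N)
  case (Suc N)
  let ?\<phi> = "\<lambda>k. min (ln (run_max x k)) L"
  have "0 < run_max x N" using pos run_max_ge[of 0 N x] x0 by simp
  then have "min (run_max x (Suc N)) (exp L) - min (run_max x N) (exp L)
      \<le> x (Suc N) * (?\<phi> (Suc N) - ?\<phi> N)"
    using min_diff_le_mult_min_ln_diff[of "run_max x N" "x (Suc N)" L]
    by (cases "x (Suc N) \<le> run_max x N") (auto simp: max_def)
  then show ?case using Suc.IH by (simp add: algebra_simps)
qed (use x0 L in simp)

lemma mult_min_ln_le:
  fixes a b L :: real
  assumes a: "0 < a" "a \<le> b" and b: "1 \<le> b"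
  shows "a * min (ln b) L \<le> xlogx_plus a + min b (exp L) * exp (-1)"
proof -
  have ln_le: "ln y \<le> y * exp (-1)" if "0 < y" for y :: real
    using ln_le_minus_one[of "y * exp (-1)"] that by (simp add: ln_mult)
  have young: "a * ln c \<le> a * ln a + c * exp (-1)" if "0 < c" for c
  proof -
    have "a * ln (c / a) \<le> a * (c / a * exp (-1))"
      using ln_le[of "c / a"] a that by (intro mult_left_mono) auto
    then show ?thesis using a that by (simp add: ln_div algebra_simps)
  qed
  have "a * ln a \<le> xlogx_plus a" using a by (simp add: xlogx_plus_def mult_left_mono)
  moreover have "a * L \<le> xlogx_plus a" if "exp L \<le> a"
    using that a ln_ge_iff[of a L] by (simp add: xlogx_plus_def mult_left_mono)
  moreover have "b \<le> exp L \<longleftrightarrow> ln b \<le> L"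
    using ln_le_cancel_iff[of b "exp L"] b by simp
  ultimately show ?thesis
    using young[of b] young[of "exp L"] b by (auto simp: min_def)
qed

text \<open>A pathwise form of Doob's \<open>L log L\<close> maximal inequality: for a martingale \<open>x\<close> the
  sum on the right is a martingale transform with the bounded predictable integrand
  \<open>min (ln (run_max x t)) L\<close>, so it has mean zero.\<close>
lemma doob_LlogL_pathwise:
  fixes x :: "nat \<Rightarrow> real"
  assumes pos: "\<And>k. x k > 0" and x0: "x 0 = 1" and L: "L \<ge> 0"
  shows "(1 - exp (-1)) * min (run_max x N) (exp L) \<le> 1 + xlogx_plus (x N)
           - (\<Sum>t<N. min (ln (run_max x t)) L * (x (Suc t) - x t))"
proof -
  have "0 < x N" "x N \<le> run_max x N" "1 \<le> run_max x N"
    using pos run_max_ge[of N N x] run_max_ge[of 0 N x] x0 by auto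
  from mult_min_ln_le[of "x N" "run_max x N" L, OF this] truncated_run_max_telescope[of x L N, OF pos x0 L]
  show ?thesis by (simp add: algebra_simps)
qed

section \<open>Integrals of monotone functions\<close>

lemma set_integrable_Ico_const: "set_integrable lborel {a..<b::real} (\<lambda>_. c :: real)"
proof -
  have "emeasure lborel {a..<b} < \<infinity>" by (cases "a \<le> b") auto
  then show ?thesis unfolding set_integrable_def by (intro integrable_scaleR_left) auto
qed

lemma set_integrable_mono_Ico:
  fixes g :: "real \<Rightarrow> real"
  assumes "mono g"
  shows "set_integrable lborel {a..<b} g"
proof (rule set_integrable_bound[OF set_integrable_Ico_const[of a b "\<bar>g a\<bar> + \<bar>g b\<bar>"]])
  show "set_borel_measurable lborel {a..<b} g"
    using borel_measurable_mono[OF assms] by (simp add: set_borel_measurable_def)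
  have "\<bar>g x\<bar> \<le> \<bar>g a\<bar> + \<bar>g b\<bar>" if "x \<in> {a..<b}" for x
    using that assms[unfolded mono_def, rule_format, of a x] assms[unfolded mono_def, rule_format, of x b]
    by auto
  then show "AE x in lborel. x \<in> {a..<b} \<longrightarrow> norm (g x) \<le> norm (\<bar>g a\<bar> + \<bar>g b\<bar>)"
    by (intro AE_I2) auto
qed

lemma set_integral_mono_Ico_split:
  fixes g :: "real \<Rightarrow> real"
  assumes "mono g" "a \<le> c" "c \<le> b"
  shows "(LINT s:{a..<b}|lborel. g s) = (LINT s:{a..<c}|lborel. g s) + (LINT s:{c..<b}|lborel. g s)"
proof -
  have "{a..<b} = {a..<c} \<union> {c..<b}" using assms by auto
  then show ?thesis
    by (simp add: set_integral_Un set_integrable_mono_Ico[OF assms(1)])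
qed

lemma set_integral_mono_Ico_bounds:
  fixes g :: "real \<Rightarrow> real"
  assumes mono: "mono g" and "a \<le> b"
  shows "(b - a) * g a \<le> (LINT s:{a..<b}|lborel. g s)"
    and "(LINT s:{a..<b}|lborel. g s) \<le> (b - a) * g b"
proof -
  have "(LINT s:{a..<b}|lborel. g c) = (b - a) * g c" for c
    using assms by (simp add: set_integral_const)
  moreover have "(LINT s:{a..<b}|lborel. g a) \<le> (LINT s:{a..<b}|lborel. g s)"
    "(LINT s:{a..<b}|lborel. g s) \<le> (LINT s:{a..<b}|lborel. g b)"
    using mono by (auto intro!: set_integral_mono set_integrable_Ico_const set_integrable_mono_Ico
        simp: mono_def)
  ultimately show "(b - a) * g a \<le> (LINT s:{a..<b}|lborel. g s)"
    and "(LINT s:{a..<b}|lborel. g s) \<le> (b - a) * g b" by simp_all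
qed

lemma sum_le_set_integral_mono:
  fixes g :: "real \<Rightarrow> real"
  assumes "mono g"
  shows "(\<Sum>k<N. g (real k)) \<le> (LINT s:{0..<real N}|lborel. g s)"
proof (induction N)
  case (Suc N)
  have "g (real N) \<le> (LINT s:{real N..<1 + real N}|lborel. g s)"
    using set_integral_mono_Ico_bounds(1)[OF assms, of "real N" "1 + real N"] by simp
  then show ?case
    using Suc set_integral_mono_Ico_split[OF assms, of 0 "real N" "1 + real N"] by simp
qed (simp add: set_lebesgue_integral_def)

lemma harm_div_3_le: "harm N / 3 \<le> (\<Sum>k<N. 1 / (real N + 2 - real k))"
proof -
  have "harm N / 3 = (\<Sum>j<N. 1 / (3 * (real j + 1)))"
    by (induction N) (simp_all add: harm_def harm_Suc inverse_eq_divide add_divide_distrib)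
  also have "\<dots> \<le> (\<Sum>j<N. 1 / (real j + 3))"
    by (intro sum_mono divide_left_mono) auto
  also have "\<dots> = (\<Sum>i<N. 1 / (real (N - Suc i) + 3))"
    by (rule sum.nat_diff_reindex[symmetric])
  also have "\<dots> = (\<Sum>k<N. 1 / (real N + 2 - real k))"
    by (intro sum.cong) auto
  finally show ?thesis .
qed

lemma sum_ge_harm_if_subgrowth:
  fixes g :: "real \<Rightarrow> real"
  assumes sub: "\<And>a b. g (real (a + b)) \<le> g (real a) * (\<kappa> * (1 + real b))"
    and "\<kappa> > 0" and "g (real (N + 1)) \<ge> 0"
  shows "g (real (N + 1)) * harm N / (3 * \<kappa>) \<le> (\<Sum>k<N. g (real k))"
proof -
  have "g (real (N + 1)) / (\<kappa> * (real N + 2 - real k)) \<le> g (real k)" if "k < N" for k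
  proof -
    have "0 < \<kappa> * (real N + 2 - real k)" using that \<open>\<kappa> > 0\<close> by simp
    moreover have "g (real (N + 1)) \<le> g (real k) * (\<kappa> * (real N + 2 - real k))"
      using sub[of k "N + 1 - k"] that by (simp add: algebra_simps)
    ultimately show ?thesis by (rule pos_divide_le_eq[THEN iffD2])
  qed
  then have "(\<Sum>k<N. g (real (N + 1)) / (\<kappa> * (real N + 2 - real k))) \<le> (\<Sum>k<N. g (real k))"
    by (intro sum_mono) simp
  moreover have "g (real (N + 1)) * (harm N / 3) / \<kappa>
      \<le> g (real (N + 1)) * (\<Sum>k<N. 1 / (real N + 2 - real k)) / \<kappa>"
    using mult_left_mono[OF harm_div_3_le[of N] assms(3)] \<open>\<kappa> > 0\<close> by (intro divide_right_mono) auto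
  ultimately show ?thesis by (simp add: sum_distrib_left sum_divide_distrib mult.commute)
qed

text \<open>With \<open>N = \<lfloor>T\<rfloor>\<close>, the integral over \<open>[0, T)\<close> is at least \<open>g (N + 1) harm N / (3 \<kappa>)\<close>,
  while the integral over the last stretch \<open>[T - t, T)\<close> is at most \<open>t g (N + 1)\<close>.\<close>
lemma tail_fraction_le:
  fixes g :: "real \<Rightarrow> real"
  assumes mono: "mono g" and g1: "\<And>x. 1 \<le> g x"
    and sub: "\<And>a b. g (real (a + b)) \<le> g (real a) * (\<kappa> * (1 + real b))"
    and "\<kappa> > 0" and "t \<ge> 0" and T: "t + 3 \<le> T"
  shows "(LINT s:{T - t..<T}|lborel. g s) / (LINT s:{0..<T}|lborel. g s)
           \<le> 3 * t * \<kappa> / harm (nat \<lfloor>T\<rfloor>)"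
proof -
  define N where "N = nat \<lfloor>T\<rfloor>"
  have N: "real N \<le> T" "T \<le> real (N + 1)" "N \<ge> 1"
  proof -
    have "real N = of_int \<lfloor>T\<rfloor>" "1 \<le> \<lfloor>T\<rfloor>"
      using T \<open>t \<ge> 0\<close> by (auto simp: N_def le_floor_iff)
    then show "real N \<le> T" "T \<le> real (N + 1)" "N \<ge> 1"
      using floor_correct[of T] by linarith+
  qed
  have "(LINT s:{T - t..<T}|lborel. g s) \<le> t * g T"
    using set_integral_mono_Ico_bounds(2)[OF mono, of "T - t" T] \<open>t \<ge> 0\<close> by simp
  also have "\<dots> \<le> t * g (real (N + 1))"
    using N mono \<open>t \<ge> 0\<close> by (intro mult_left_mono) (auto simp: mono_def)
  finally have tail: "(LINT s:{T - t..<T}|lborel. g s) \<le> t * g (real (N + 1))" .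
  have "g (real (N + 1)) * harm N / (3 * \<kappa>) \<le> (\<Sum>k<N. g (real k))"
    using sum_ge_harm_if_subgrowth[OF sub \<open>\<kappa> > 0\<close>] g1[of "real (N + 1)"] by simp
  also have "\<dots> \<le> (LINT s:{0..<real N}|lborel. g s)" by (rule sum_le_set_integral_mono[OF mono])
  also have "\<dots> \<le> (LINT s:{0..<T}|lborel. g s)"
  proof -
    have "0 \<le> (T - real N) * g (real N)" using N g1[of "real N"] by simp
    then show ?thesis
      using set_integral_mono_Ico_split[OF mono, of 0 "real N" T]
        set_integral_mono_Ico_bounds(1)[OF mono, of "real N" T] N by linarith
  qed
  finally have whole: "g (real (N + 1)) * harm N / (3 * \<kappa>) \<le> (LINT s:{0..<T}|lborel. g s)" .
  have "(0::real) < harm N" using N by (intro harm_pos) simp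
  then have "(LINT s:{T - t..<T}|lborel. g s) / (LINT s:{0..<T}|lborel. g s)
      \<le> t * g (real (N + 1)) / (g (real (N + 1)) * harm N / (3 * \<kappa>))"
    using tail whole g1[of "real (N + 1)"] \<open>\<kappa> > 0\<close> \<open>t \<ge> 0\<close>
      set_integral_mono_Ico_bounds(1)[OF mono, of "T - t" T] g1[of "T - t"]
    by (intro frac_le) (auto intro: order_trans[rotated])
  also have "\<dots> = 3 * t * \<kappa> / harm N"
    using g1[of "real (N + 1)"] \<open>0 < harm N\<close> \<open>\<kappa> > 0\<close> by (simp add: field_simps)
  finally show ?thesis unfolding N_def .
qed

lemma set_integral_Ico_ratio_tendsto_1:
  fixes g :: "real \<Rightarrow> real"
  assumes mono: "mono g" and g1: "\<And>x. 1 \<le> g x"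
    and sub: "\<And>a b. g (real (a + b)) \<le> g (real a) * (\<kappa> * (1 + real b))"
    and "\<kappa> > 0" and "t \<ge> 0"
  shows "((\<lambda>T. (LINT s:{0..<T - t}|lborel. g s) / (LINT s:{0..<T}|lborel. g s)) \<longlongrightarrow> 1) at_top"
proof -
  define tail where "tail T = (LINT s:{T - t..<T}|lborel. g s) / (LINT s:{0..<T}|lborel. g s)" for T
  have "eventually (\<lambda>T. (LINT s:{0..<T - t}|lborel. g s) / (LINT s:{0..<T}|lborel. g s) = 1 - tail T) at_top"
  proof (rule eventually_mono[OF eventually_ge_at_top[of "t + 3"]])
    fix T assume T: "t + 3 \<le> T"
    have "0 < (LINT s:{0..<T}|lborel. g s)"
      using set_integral_mono_Ico_bounds(1)[OF mono, of 0 T] g1[of 0] T \<open>t \<ge> 0\<close>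
      by (smt (verit) mult_le_cancel_left1)
    then show "(LINT s:{0..<T - t}|lborel. g s) / (LINT s:{0..<T}|lborel. g s) = 1 - tail T"
      using set_integral_mono_Ico_split[OF mono, of 0 "T - t" T] T \<open>t \<ge> 0\<close>
      by (simp add: tail_def field_simps)
  qed
  moreover have "(tail \<longlongrightarrow> 0) at_top"
  proof (rule tendsto_sandwich)
    have "0 \<le> tail T" if "t \<le> T" for T
      using set_integral_mono_Ico_bounds(1)[OF mono, of "T - t" T] g1[of "T - t"]
        set_integral_mono_Ico_bounds(1)[OF mono, of 0 T] g1[of 0] that \<open>t \<ge> 0\<close>
      unfolding tail_def by (intro divide_nonneg_nonneg) (simp_all add: order_trans[rotated])
    then show "eventually (\<lambda>T. 0 \<le> tail T) at_top"
      by (blast intro: eventually_mono[OF eventually_ge_at_top[of t]])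
    show "eventually (\<lambda>T::real. tail T \<le> 3 * t * \<kappa> / harm (nat \<lfloor>T\<rfloor>)) at_top"
      using eventually_ge_at_top[of "t + 3"] unfolding tail_def
      by eventually_elim (rule tail_fraction_le[OF mono g1 sub \<open>\<kappa> > 0\<close> \<open>t \<ge> 0\<close>])
    have "filterlim (\<lambda>T::real. harm (nat \<lfloor>T\<rfloor>) :: real) at_top at_top"
      by (rule filterlim_compose[OF harm_at_top
            filterlim_compose[OF filterlim_nat_sequentially filterlim_floor_sequentially]])
    then have "filterlim (\<lambda>T::real. harm (nat \<lfloor>T\<rfloor>) :: real) at_infinity at_top"
      by (rule filterlim_at_top_imp_at_infinity)
    then show "((\<lambda>T::real. 3 * t * \<kappa> / harm (nat \<lfloor>T\<rfloor>)) \<longlongrightarrow> 0) at_top"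
      by (rule tendsto_divide_0[OF tendsto_const])
  qed simp
  ultimately show ?thesis
    using tendsto_diff[OF tendsto_const[of 1] \<open>(tail \<longlongrightarrow> 0) at_top\<close>]
    by (simp add: tendsto_cong)
qed

section \<open>Cadlag functions and dyadic approximation\<close>

lemma cadlag_locally_bdd_above:
  fixes g :: "real \<Rightarrow> real"
  assumes rc: "continuous (at_right t) g" and ll: "0 < t \<Longrightarrow> \<exists>l. (g \<longlongrightarrow> l) (at_left t)"
    and "0 \<le> t"
  shows "\<exists>d B. 0 < d \<and> (\<forall>u\<ge>0. dist u t < d \<longrightarrow> g u \<le> B)"
proof -
  have "eventually (\<lambda>u. g u < g t + 1) (at_right t)"
    by (rule order_tendstoD(2)) (use rc in \<open>auto simp: continuous_within\<close>)
  then obtain br where br: "t < br" "\<And>u. t < u \<Longrightarrow> u < br \<Longrightarrow> g u < g t + 1"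
    using eventually_at_right[of t "t + 1"] by auto
  obtain bl B where bl: "bl < t" "\<And>u. bl < u \<Longrightarrow> u < t \<Longrightarrow> 0 \<le> u \<Longrightarrow> g u < B"
  proof (cases "t = 0")
    case False
    then obtain l where "(g \<longlongrightarrow> l) (at_left t)" using ll \<open>0 \<le> t\<close> by auto
    then have "eventually (\<lambda>u. g u < l + 1) (at_left t)" by (rule order_tendstoD) simp
    then obtain b where "b < t" "\<And>u. b < u \<Longrightarrow> u < t \<Longrightarrow> g u < l + 1"
      using eventually_at_left[of "t - 1" t] by auto
    then show ?thesis by (intro that[of b "l + 1"]) auto
  qed (use that[of "-1" 0] in auto)
  have "g u \<le> max (g t + 1) B" if "0 \<le> u" "dist u t < min (br - t) (t - bl)" for u
  proof (cases u t rule: linorder_cases)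
    case less
    then show ?thesis using that bl(2)[of u] by (simp add: dist_real_def)
  next
    case greater
    then show ?thesis using that br(2)[of u] by (simp add: dist_real_def)
  qed simp
  then show ?thesis using br(1) bl(1) by (intro exI[of _ "min (br - t) (t - bl)"] exI[of _ "max (g t + 1) B"]) auto
qed

lemma cadlag_bdd_above:
  fixes g :: "real \<Rightarrow> real"
  assumes "\<And>t. 0 \<le> t \<Longrightarrow> continuous (at_right t) g"
    and "\<And>t. 0 < t \<Longrightarrow> \<exists>l. (g \<longlongrightarrow> l) (at_left t)"
  shows "bdd_above (g ` {0..T})"
proof -
  have "\<forall>t. \<exists>dB. 0 \<le> t \<longrightarrow> 0 < fst dB \<and> (\<forall>u\<ge>0. dist u t < fst dB \<longrightarrow> g u \<le> snd dB)"
    using cadlag_locally_bdd_above[OF assms] by (metis fst_conv snd_conv)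
  from choice[OF this] obtain dB
    where "\<forall>t. 0 \<le> t \<longrightarrow> 0 < fst (dB t) \<and> (\<forall>u\<ge>0. dist u t < fst (dB t) \<longrightarrow> g u \<le> snd (dB t))"
    by blast
  then obtain d B where dB: "\<And>t. 0 \<le> t \<Longrightarrow> 0 < d t \<and> (\<forall>u\<ge>0. dist u t < d t \<longrightarrow> g u \<le> B t)"
    by (intro that[of "fst \<circ> dB" "snd \<circ> dB"]) simp
  have cover: "{0..T} \<subseteq> (\<Union>c\<in>{0..T}. ball c (d c))"
  proof
    fix u assume "u \<in> {0..T}"
    then show "u \<in> (\<Union>c\<in>{0..T}. ball c (d c))" using dB[of u] by (intro UN_I[of u]) auto
  qed
  then obtain C where C: "C \<subseteq> {0..T}" "finite C" "{0..T} \<subseteq> (\<Union>c\<in>C. ball c (d c))"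
    using compactE_image[OF compact_Icc _ cover] by blast
  show ?thesis
  proof (rule bdd_aboveI2)
    fix u assume u: "u \<in> {0..T}"
    then obtain c where c: "c \<in> C" "dist u c < d c" using C by (force simp: dist_commute)
    then have "g u \<le> B c" using dB[of c] u C by auto
    also have "\<dots> \<le> Max (B ` C)" using c C by (intro Max_ge) auto
    finally show "g u \<le> Max (B ` C)" .
  qed
qed

lemma dyadic_ceiling_approx:
  fixes s :: real
  assumes "0 \<le> s"
  shows "s \<le> real (nat \<lceil>s * 2 ^ n\<rceil>) / 2 ^ n"
    and "(\<lambda>n. real (nat \<lceil>s * 2 ^ n\<rceil>) / 2 ^ n) \<longlonglongrightarrow> s"
proof -
  have bounds: "s \<le> real (nat \<lceil>s * 2 ^ n\<rceil>) / 2 ^ n \<and> real (nat \<lceil>s * 2 ^ n\<rceil>) / 2 ^ n \<le> s + inverse (2 ^ n)" for n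
  proof -
    have "real (nat \<lceil>s * 2 ^ n\<rceil>) = of_int \<lceil>s * 2 ^ n\<rceil>" using assms by simp
    then have "s * 2 ^ n \<le> real (nat \<lceil>s * 2 ^ n\<rceil>)" "real (nat \<lceil>s * 2 ^ n\<rceil>) \<le> s * 2 ^ n + 1"
      using of_int_ceiling_le_add_one[of "s * 2 ^ n"] by linarith+
    then show ?thesis by (simp add: field_simps)
  qed
  then show "s \<le> real (nat \<lceil>s * 2 ^ n\<rceil>) / 2 ^ n" by blast
  show "(\<lambda>n. real (nat \<lceil>s * 2 ^ n\<rceil>) / 2 ^ n) \<longlonglongrightarrow> s"
  proof (rule tendsto_sandwich[of "\<lambda>n. s" _ _ "\<lambda>n. s + inverse (2 ^ n)"])
    show "(\<lambda>n. s + inverse (2 ^ n)) \<longlonglongrightarrow> s"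
      using tendsto_add[OF tendsto_const LIMSEQ_inverse_realpow_zero[of "2::real"]] by simp
  qed (use bounds in auto)
qed

lemma nat_ceiling_dyadic_le:
  fixes s T :: real
  assumes "0 \<le> s" "s \<le> T"
  shows "nat \<lceil>s * 2 ^ n\<rceil> \<le> nat \<lceil>T\<rceil> * 2 ^ n"
proof -
  have "s * 2 ^ n \<le> T * 2 ^ n" using assms by simp
  also have "\<dots> \<le> of_int (\<lceil>T\<rceil> * 2 ^ n)" by simp
  finally have "nat \<lceil>s * 2 ^ n\<rceil> \<le> nat (\<lceil>T\<rceil> * 2 ^ n)" by (intro nat_mono) (simp add: ceiling_le_iff)
  also have "\<dots> = nat \<lceil>T\<rceil> * 2 ^ n" using assms by (simp add: nat_mult_distrib nat_power_eq)
  finally show ?thesis .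
qed

lemma identically_distributed_integral:
  assumes eq: "distr M borel Y = distr M borel Z"
    and [measurable]: "Y \<in> borel_measurable M" "Z \<in> borel_measurable M" "g \<in> borel_measurable borel"
  shows "integrable M (\<lambda>\<omega>. g (Y \<omega>)) \<longleftrightarrow> integrable M (\<lambda>\<omega>. g (Z \<omega>) :: real)"
    and "integral\<^sup>L M (\<lambda>\<omega>. g (Y \<omega>)) = integral\<^sup>L M (\<lambda>\<omega>. g (Z \<omega>))"
proof -
  show "integrable M (\<lambda>\<omega>. g (Y \<omega>)) \<longleftrightarrow> integrable M (\<lambda>\<omega>. g (Z \<omega>))"
    using integrable_distr_eq[of Y M borel g] integrable_distr_eq[of Z M borel g] eq by simp
  show "integral\<^sup>L M (\<lambda>\<omega>. g (Y \<omega>)) = integral\<^sup>L M (\<lambda>\<omega>. g (Z \<omega>))"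
    using integral_distr[of Y M borel g] integral_distr[of Z M borel g] eq by simp
qed

section \<open>Levy processes and their dyadic skeletons\<close>

locale levy =
  fixes M :: "'a measure" and X :: "real \<Rightarrow> 'a \<Rightarrow> real"
  assumes levy_process: "levy_process M X"
begin

sublocale prob_space M
  using levy_process by (simp add: levy_process_def)

lemma borel_measurable_X [measurable]: "0 \<le> t \<Longrightarrow> X t \<in> borel_measurable M"
  using levy_process by (simp add: levy_process_def)

lemma X_0: "\<omega> \<in> space M \<Longrightarrow> X 0 \<omega> = 0"
  using levy_process by (simp add: levy_process_def)

lemma indep_increments:
  "0 \<le> ts 0 \<Longrightarrow> (\<And>i. i < n \<Longrightarrow> ts i \<le> ts (Suc i)) \<Longrightarrow>
    indep_vars (\<lambda>_. borel) (\<lambda>i \<omega>. X (ts (Suc i)) \<omega> - X (ts i) \<omega>) {..<n}"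
  using levy_process by (simp add: levy_process_def)

lemma distr_increment:
  "0 \<le> s \<Longrightarrow> 0 \<le> t \<Longrightarrow> distr M borel (\<lambda>\<omega>. X (s + t) \<omega> - X s \<omega>) = distr M borel (X t)"
  using levy_process by (simp add: levy_process_def)

lemma bdd_above_path: "\<omega> \<in> space M \<Longrightarrow> bdd_above ((\<lambda>s. X s \<omega>) ` {0..T})"
  using levy_process by (intro cadlag_bdd_above) (auto simp: levy_process_def)

lemma continuous_at_right_path: "\<omega> \<in> space M \<Longrightarrow> 0 \<le> t \<Longrightarrow> continuous (at_right t) (\<lambda>s. X s \<omega>)"
  using levy_process by (simp add: levy_process_def)

definition incr :: "real \<Rightarrow> real \<Rightarrow> nat \<Rightarrow> 'a \<Rightarrow> real" where
  "incr c h i \<omega> = X (c + real (Suc i) * h) \<omega> - X (c + real i * h) \<omega>"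

definition walk :: "real \<Rightarrow> real \<Rightarrow> nat \<Rightarrow> 'a \<Rightarrow> real" where
  "walk c h j \<omega> = X (c + real j * h) \<omega> - X c \<omega>"

lemma borel_measurable_incr [measurable]: "0 \<le> c \<Longrightarrow> 0 \<le> h \<Longrightarrow> incr c h i \<in> borel_measurable M"
  unfolding incr_def by measurable

lemma borel_measurable_walk [measurable]: "0 \<le> c \<Longrightarrow> 0 \<le> h \<Longrightarrow> walk c h j \<in> borel_measurable M"
  unfolding walk_def by measurable

lemma walk_eq_sum_incr: "walk c h j \<omega> = (\<Sum>i<j. incr c h i \<omega>)"
  by (induction j) (auto simp: walk_def incr_def)

lemma walk_Suc: "walk c h (Suc j) \<omega> = walk c h j \<omega> + incr c h j \<omega>"
  by (simp add: walk_eq_sum_incr)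

lemma walk_0 [simp]: "walk c h 0 \<omega> = 0"
  by (simp add: walk_def)

lemma indep_vars_incr: "0 \<le> c \<Longrightarrow> 0 \<le> h \<Longrightarrow> indep_vars (\<lambda>_. borel) (incr c h) {..<m}"
  unfolding incr_def[abs_def] by (rule indep_increments) (auto intro: mult_right_mono)

lemma distr_incr:
  assumes "0 \<le> c" "0 \<le> h"
  shows "distr M borel (incr c h i) = distr M borel (X h)"
proof -
  have "c + real (Suc i) * h = (c + real i * h) + h" by (simp add: distrib_right)
  then show ?thesis
    using distr_increment[of "c + real i * h" h] assms by (simp only: incr_def[abs_def]) simp
qed

lemma indep_var_incr_blocks:
  assumes "0 \<le> c" "0 \<le> h" "p \<le> m"
    and F: "F \<in> borel_measurable (PiM {..<p} (\<lambda>_. borel))"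
    and G: "G \<in> borel_measurable (PiM {p..<m} (\<lambda>_. borel))"
  shows "indep_var borel (\<lambda>\<omega>. F (\<lambda>i\<in>{..<p}. incr c h i \<omega>)) borel (\<lambda>\<omega>. G (\<lambda>i\<in>{p..<m}. incr c h i \<omega>))"
proof -
  have "indep_var (PiM {..<p} (\<lambda>_. borel)) (\<lambda>\<omega>. \<lambda>i\<in>{..<p}. incr c h i \<omega>)
                  (PiM {p..<m} (\<lambda>_. borel)) (\<lambda>\<omega>. \<lambda>i\<in>{p..<m}. incr c h i \<omega>)"
    using assms by (intro indep_var_restrict[OF indep_vars_incr]) auto
  from indep_var_compose[OF this F G] show ?thesis by (simp add: comp_def)
qed

definition dyadic_max :: "nat \<Rightarrow> real \<Rightarrow> 'a \<Rightarrow> real" where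
  "dyadic_max n T \<omega> = run_max (\<lambda>k. X (min (real k / 2 ^ n) T) \<omega>) (nat \<lceil>T\<rceil> * 2 ^ n)"

lemma borel_measurable_dyadic_max [measurable]: "0 \<le> T \<Longrightarrow> dyadic_max n T \<in> borel_measurable M"
  unfolding dyadic_max_def[abs_def] by measurable

lemma dyadic_max_le_running_sup: "\<omega> \<in> space M \<Longrightarrow> 0 \<le> T \<Longrightarrow> dyadic_max n T \<omega> \<le> running_sup X T \<omega>"
  unfolding dyadic_max_def running_sup_def
  by (intro run_max_le cSup_upper bdd_above_path) auto

lemma dyadic_max_le_Suc: "dyadic_max n T \<omega> \<le> dyadic_max (Suc n) T \<omega>"
  unfolding dyadic_max_def
proof (intro run_max_le)
  fix k assume "k \<le> nat \<lceil>T\<rceil> * 2 ^ n"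
  then have "X (min (real (2 * k) / 2 ^ Suc n) T) \<omega>
      \<le> run_max (\<lambda>k. X (min (real k / 2 ^ Suc n) T) \<omega>) (nat \<lceil>T\<rceil> * 2 ^ Suc n)"
    by (intro run_max_ge) auto
  then show "X (min (real k / 2 ^ n) T) \<omega> \<le> run_max (\<lambda>k. X (min (real k / 2 ^ Suc n) T) \<omega>) (nat \<lceil>T\<rceil> * 2 ^ Suc n)"
    by simp
qed

text \<open>Approximate a time \<open>s\<close> from the right by the dyadic points \<open>\<lceil>s 2\<^sup>n\<rceil> / 2\<^sup>n\<close> and use
  right-continuity of the path.\<close>
lemma dyadic_max_tendsto_running_sup:
  assumes \<omega>: "\<omega> \<in> space M" and T: "0 \<le> T"
  shows "(\<lambda>n. dyadic_max n T \<omega>) \<longlonglongrightarrow> running_sup X T \<omega>"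
proof -
  have bdd: "bdd_above (range (\<lambda>n. dyadic_max n T \<omega>))"
    using dyadic_max_le_running_sup[OF \<omega> T] by (intro bdd_aboveI2) auto
  have lim: "(\<lambda>n. dyadic_max n T \<omega>) \<longlonglongrightarrow> (SUP n. dyadic_max n T \<omega>)"
    by (intro LIMSEQ_incseq_SUP bdd incseq_SucI dyadic_max_le_Suc)
  have "X s \<omega> \<le> (SUP n. dyadic_max n T \<omega>)" if s: "0 \<le> s" "s \<le> T" for s
  proof -
    define p where "p n = min (real (nat \<lceil>s * 2 ^ n\<rceil>) / 2 ^ n) T" for n
    have "p \<longlonglongrightarrow> min s T" unfolding p_def by (intro tendsto_min dyadic_ceiling_approx s tendsto_const)
    then have "p \<longlonglongrightarrow> s" using s(2) by (simp add: min_absorb1)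
    moreover have "s \<le> p n" for n using s dyadic_ceiling_approx(1)[OF s(1), of n] by (simp add: p_def)
    moreover have "continuous (at s within {s..}) (\<lambda>s. X s \<omega>)"
      using continuous_at_right_path[OF \<omega> s(1)] by (simp add: at_within_Ici_at_right)
    ultimately have "(\<lambda>n. X (p n) \<omega>) \<longlonglongrightarrow> X s \<omega>"
      by (auto simp: continuous_within_sequentially comp_def)
    moreover have "X (p n) \<omega> \<le> dyadic_max n T \<omega>" for n
      unfolding dyadic_max_def p_def using s by (intro run_max_ge nat_ceiling_dyadic_le)
    then have "X (p n) \<omega> \<le> (SUP n. dyadic_max n T \<omega>)" for n
      by (rule order_trans) (rule cSUP_upper[OF _ bdd], simp)
    ultimately show ?thesis by (intro LIMSEQ_le_const2) auto
  qed
  then have "running_sup X T \<omega> \<le> (SUP n. dyadic_max n T \<omega>)"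
    unfolding running_sup_def using T by (intro cSup_least) auto
  moreover have "(SUP n. dyadic_max n T \<omega>) \<le> running_sup X T \<omega>"
    using dyadic_max_le_running_sup[OF \<omega> T] by (intro cSUP_least) auto
  ultimately show ?thesis using lim by simp
qed

lemma borel_measurable_running_sup [measurable]: "0 \<le> T \<Longrightarrow> running_sup X T \<in> borel_measurable M"
  by (rule borel_measurable_LIMSEQ_real[OF dyadic_max_tendsto_running_sup borel_measurable_dyadic_max])

lemma running_sup_mono: "\<omega> \<in> space M \<Longrightarrow> 0 \<le> s \<Longrightarrow> s \<le> T \<Longrightarrow> running_sup X s \<omega> \<le> running_sup X T \<omega>"
  unfolding running_sup_def by (rule cSup_subset_mono) (auto intro: bdd_above_path)

lemma running_sup_nonneg: "\<omega> \<in> space M \<Longrightarrow> 0 \<le> T \<Longrightarrow> 0 \<le> running_sup X T \<omega>"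
  unfolding running_sup_def using X_0[of \<omega>]
  by (intro cSup_upper2[where x="X 0 \<omega>"] bdd_above_path) auto

lemma dyadic_max_nat:
  "\<omega> \<in> space M \<Longrightarrow> dyadic_max n (real N) \<omega> = run_max (\<lambda>k. walk 0 (1 / 2 ^ n) k \<omega>) (N * 2 ^ n)"
  unfolding dyadic_max_def
proof (simp, rule run_max_cong)
  fix k assume "\<omega> \<in> space M" "k \<le> N * 2 ^ n"
  then have "real k \<le> real N * 2 ^ n"
    by (metis of_nat_le_iff of_nat_mult of_nat_numeral of_nat_power)
  then have "real k / 2 ^ n \<le> real N" by (simp add: field_simps)
  with \<open>\<omega> \<in> space M\<close> show "X (min (real k / 2 ^ n) (real N)) \<omega> = walk 0 (1 / 2 ^ n) k \<omega>"
    by (simp add: walk_def X_0)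
qed

lemma dyadic_max_add_le:
  fixes a b :: nat
  assumes "\<omega> \<in> space M"
  shows "dyadic_max n (real (a + b)) \<omega>
    \<le> run_max (\<lambda>k. walk 0 (1 / 2 ^ n) k \<omega>) (a * 2 ^ n) + run_max (\<lambda>j. walk (real a) (1 / 2 ^ n) j \<omega>) (b * 2 ^ n)"
proof -
  define h :: real where "h = 1 / 2 ^ n"
  have a: "real (a * 2 ^ n) * h = real a" by (simp add: h_def)
  have "real (a * 2 ^ n + j) * h = real a + real j * h" for j
    by (simp only: of_nat_add distrib_right a)
  then have "walk 0 h (a * 2 ^ n + j) \<omega> - walk 0 h (a * 2 ^ n) \<omega> = walk (real a) h j \<omega>" for j
    unfolding walk_def by (simp only: add_0_left a)
  then show ?thesis
    using run_max_add_le[of "\<lambda>k. walk 0 h k \<omega>" "a * 2 ^ n" "b * 2 ^ n"] dyadic_max_nat[OF assms, of n "a + b"]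
    by (simp add: h_def add_mult_distrib)
qed

end

section \<open>The exponential martingale\<close>

lemma ennreal_power_eq_1:
  fixes c :: ennreal
  assumes "c ^ K = 1" "0 < K"
  shows "c = 1"
proof -
  obtain r where r: "c = ennreal r" "0 \<le> r"
    using assms by (cases c) (auto simp: power_eq_top_ennreal)
  then have "r ^ K = 1 ^ K" using assms(1) by (simp add: ennreal_power)
  then show ?thesis using power_eq_iff_eq_base[of K r 1] assms r by simp
qed

locale cramer_levy = levy +
  fixes \<alpha> :: real
  assumes \<alpha>_pos: "0 < \<alpha>"
    and integrable_exp_X_1: "integrable M (\<lambda>\<omega>. exp (\<alpha> * X 1 \<omega>))"
    and integral_exp_X_1: "integral\<^sup>L M (\<lambda>\<omega>. exp (\<alpha> * X 1 \<omega>)) = 1"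
    and integrable_X_exp_X_1: "integrable M (\<lambda>\<omega>. X 1 \<omega> * exp (\<alpha> * X 1 \<omega>))"
begin

text \<open>\<open>X 1\<close> is the sum of \<open>K\<close> independent copies of \<open>X (1 / K)\<close>, so the mean of
  \<open>exp (\<alpha> X (1 / K))\<close> is a \<open>K\<close>-th root of \<open>1\<close>.\<close>
lemma integral_exp_X_inverse_nat:
  assumes K: "0 < K"
  shows "integrable M (\<lambda>\<omega>. exp (\<alpha> * X (1 / real K) \<omega>))"
    and "integral\<^sup>L M (\<lambda>\<omega>. exp (\<alpha> * X (1 / real K) \<omega>)) = 1"
proof -
  define h where "h = 1 / real K"
  have h: "0 \<le> h" by (simp add: h_def)
  have prod: "exp (\<alpha> * X 1 \<omega>) = (\<Prod>i<K. ennreal (exp (\<alpha> * incr 0 h i \<omega>)))" if "\<omega> \<in> space M" for \<omega>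
    using walk_eq_sum_incr[of 0 h K \<omega>] K that
    by (simp add: h_def walk_def X_0 sum_distrib_left exp_sum prod_ennreal)
  have each: "(\<integral>\<^sup>+\<omega>. exp (\<alpha> * incr 0 h i \<omega>) \<partial>M) = (\<integral>\<^sup>+\<omega>. exp (\<alpha> * X h \<omega>) \<partial>M)" for i
  proof -
    have "(\<integral>\<^sup>+\<omega>. exp (\<alpha> * incr 0 h i \<omega>) \<partial>M) = (\<integral>\<^sup>+x. exp (\<alpha> * x) \<partial>distr M borel (incr 0 h i))"
      using h by (subst nn_integral_distr) auto
    also have "\<dots> = (\<integral>\<^sup>+x. exp (\<alpha> * x) \<partial>distr M borel (X h))"
      using distr_incr[OF _ h, of 0 i] by simp
    also have "\<dots> = (\<integral>\<^sup>+\<omega>. exp (\<alpha> * X h \<omega>) \<partial>M)"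
      using h by (subst nn_integral_distr) auto
    finally show ?thesis .
  qed
  have "ennreal 1 = (\<integral>\<^sup>+\<omega>. exp (\<alpha> * X 1 \<omega>) \<partial>M)"
    using nn_integral_eq_integral[OF integrable_exp_X_1] integral_exp_X_1 by simp
  also have "\<dots> = (\<integral>\<^sup>+\<omega>. (\<Prod>i<K. ennreal (exp (\<alpha> * incr 0 h i \<omega>))) \<partial>M)"
    by (rule nn_integral_cong) (simp add: prod)
  also have "\<dots> = (\<Prod>i<K. \<integral>\<^sup>+\<omega>. exp (\<alpha> * incr 0 h i \<omega>) \<partial>M)"
    by (intro indep_vars_nn_integral indep_vars_compose2[OF indep_vars_incr[OF _ h]]) auto
  also have "\<dots> = (\<integral>\<^sup>+\<omega>. exp (\<alpha> * X h \<omega>) \<partial>M) ^ K" by (simp add: each)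
  finally have "(\<integral>\<^sup>+\<omega>. exp (\<alpha> * X h \<omega>) \<partial>M) = ennreal 1"
    using ennreal_power_eq_1 K by simp
  then have "integrable M (\<lambda>\<omega>. exp (\<alpha> * X h \<omega>)) \<and> integral\<^sup>L M (\<lambda>\<omega>. exp (\<alpha> * X h \<omega>)) = 1"
    using h by (subst (asm) nn_integral_eq_integrable) auto
  then show "integrable M (\<lambda>\<omega>. exp (\<alpha> * X (1 / real K) \<omega>))"
    and "integral\<^sup>L M (\<lambda>\<omega>. exp (\<alpha> * X (1 / real K) \<omega>)) = 1" by (simp_all add: h_def)
qed

lemma integral_exp_incr:
  assumes "0 \<le> c" "0 < K" "h = 1 / real K"
  shows "integrable M (\<lambda>\<omega>. exp (\<alpha> * incr c h i \<omega>))"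
    and "integral\<^sup>L M (\<lambda>\<omega>. exp (\<alpha> * incr c h i \<omega>)) = 1"
  using identically_distributed_integral[OF distr_incr, of c h i "\<lambda>x. exp (\<alpha> * x)"]
    integral_exp_X_inverse_nat[OF assms(2)] assms by simp_all

lemma integrable_exp_walk:
  assumes "0 \<le> c" "0 < K" "h = 1 / real K"
  shows "integrable M (\<lambda>\<omega>. exp (\<alpha> * walk c h j \<omega>))"
proof -
  have "integrable M (\<lambda>\<omega>. \<Prod>i<j. exp (\<alpha> * incr c h i \<omega>))"
    using assms integral_exp_incr[OF assms]
    by (intro indep_vars_integrable indep_vars_compose2[OF indep_vars_incr]) auto
  then show ?thesis by (simp add: walk_eq_sum_incr sum_distrib_left exp_sum)
qed

text \<open>The martingale property of \<open>exp (\<alpha> walk c h j)\<close>.\<close>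
lemma integral_mult_exp_incr:
  assumes "0 \<le> c" "0 < K" "h = 1 / real K"
    and F: "F \<in> borel_measurable (PiM {..<t} (\<lambda>_. borel))"
    and int: "integrable M (\<lambda>\<omega>. F (\<lambda>i\<in>{..<t}. incr c h i \<omega>))"
  shows "integrable M (\<lambda>\<omega>. F (\<lambda>i\<in>{..<t}. incr c h i \<omega>) * exp (\<alpha> * incr c h t \<omega>))"
    and "integral\<^sup>L M (\<lambda>\<omega>. F (\<lambda>i\<in>{..<t}. incr c h i \<omega>) * exp (\<alpha> * incr c h t \<omega>))
       = integral\<^sup>L M (\<lambda>\<omega>. F (\<lambda>i\<in>{..<t}. incr c h i \<omega>))"
proof -
  have "(\<lambda>v. exp (\<alpha> * v t)) \<in> borel_measurable (PiM {t..<Suc t} (\<lambda>_. borel))" by measurable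
  then have ind: "indep_var borel (\<lambda>\<omega>. F (\<lambda>i\<in>{..<t}. incr c h i \<omega>))
      borel (\<lambda>\<omega>. exp (\<alpha> * (\<lambda>i\<in>{t..<Suc t}. incr c h i \<omega>) t))"
    using assms by (intro indep_var_incr_blocks[OF _ _ _ F]) auto
  show "integrable M (\<lambda>\<omega>. F (\<lambda>i\<in>{..<t}. incr c h i \<omega>) * exp (\<alpha> * incr c h t \<omega>))"
    using indep_var_integrable[OF ind int] integral_exp_incr[OF assms(1-3)] by simp
  show "integral\<^sup>L M (\<lambda>\<omega>. F (\<lambda>i\<in>{..<t}. incr c h i \<omega>) * exp (\<alpha> * incr c h t \<omega>))
      = integral\<^sup>L M (\<lambda>\<omega>. F (\<lambda>i\<in>{..<t}. incr c h i \<omega>))"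
    using indep_var_lebesgue_integral[OF ind int] integral_exp_incr[OF assms(1-3)] by simp
qed

lemma one_le_run_max_exp_walk: "1 \<le> run_max (\<lambda>j. exp (\<alpha> * walk c h j \<omega>)) m"
  using run_max_ge[of 0 m "\<lambda>j. exp (\<alpha> * walk c h j \<omega>)"] by simp

lemma borel_measurable_block_sum:
  fixes j t p :: nat
  shows "j \<le> t \<Longrightarrow> (\<lambda>v. \<Sum>i<j. v (p + i) :: real) \<in> borel_measurable (PiM {p..<p + t} (\<lambda>_. borel))"
  by (intro borel_measurable_sum measurable_component_singleton) auto

lemmas borel_measurable_prefix_sum = borel_measurable_block_sum[where p=0, simplified]

lemma integral_truncated_log_transform_eq_0:
  fixes t :: nat
  assumes "0 \<le> c" "0 < K" "h = 1 / real K" and L: "0 \<le> L"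
  defines "\<phi> \<equiv> \<lambda>\<omega>. min (ln (run_max (\<lambda>j. exp (\<alpha> * walk c h j \<omega>)) t)) L"
  shows "integrable M (\<lambda>\<omega>. \<phi> \<omega> * (exp (\<alpha> * walk c h (Suc t) \<omega>) - exp (\<alpha> * walk c h t \<omega>)))"
    and "integral\<^sup>L M (\<lambda>\<omega>. \<phi> \<omega> * (exp (\<alpha> * walk c h (Suc t) \<omega>) - exp (\<alpha> * walk c h t \<omega>))) = 0"
proof -
  have h: "0 \<le> h" using assms by simp
  define F where "F v = min (ln (run_max (\<lambda>j. exp (\<alpha> * (\<Sum>i<j. v i))) t)) L * exp (\<alpha> * (\<Sum>i<t. v i))"
    for v :: "nat \<Rightarrow> real"
  have [measurable]: "(\<lambda>v. run_max (\<lambda>j. exp (\<alpha> * (\<Sum>i<j. v i))) t) \<in> borel_measurable (PiM {..<t} (\<lambda>_. borel))"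
    using borel_measurable_prefix_sum by (intro measurable_run_max) measurable
  have [measurable]: "(\<lambda>v. \<Sum>i<t. v i :: real) \<in> borel_measurable (PiM {..<t} (\<lambda>_. borel))"
    using borel_measurable_prefix_sum[of t t] by simp
  have F: "F \<in> borel_measurable (PiM {..<t} (\<lambda>_. borel))" unfolding F_def by measurable
  have walk_restrict: "(\<Sum>i<j. (\<lambda>i\<in>{..<t}. incr c h i \<omega>) i) = walk c h j \<omega>" if "j \<le> t" for j \<omega>
    using that by (simp add: walk_eq_sum_incr)
  have F_incr: "F (\<lambda>i\<in>{..<t}. incr c h i \<omega>) = \<phi> \<omega> * exp (\<alpha> * walk c h t \<omega>)" for \<omega>
    unfolding F_def \<phi>_def using walk_restrict by (simp cong: run_max_cong)
  have [measurable]: "walk c h j \<in> borel_measurable M" for j using assms h by measurable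
  have bounds: "0 \<le> \<phi> \<omega> \<and> \<phi> \<omega> \<le> L" for \<omega>
    using one_le_run_max_exp_walk[of c h \<omega> t] L by (simp add: \<phi>_def)
  have "integrable M (\<lambda>\<omega>. \<phi> \<omega> * exp (\<alpha> * walk c h t \<omega>))"
  proof (rule Bochner_Integration.integrable_bound[OF
        integrable_mult_right[OF integrable_exp_walk[OF assms(1-3), of t], of L]])
    show "(\<lambda>\<omega>. \<phi> \<omega> * exp (\<alpha> * walk c h t \<omega>)) \<in> borel_measurable M"
      unfolding \<phi>_def by measurable
    show "AE \<omega> in M. norm (\<phi> \<omega> * exp (\<alpha> * walk c h t \<omega>)) \<le> norm (L * exp (\<alpha> * walk c h t \<omega>))"
      using bounds L by (intro AE_I2) (auto simp: abs_mult intro!: mult_right_mono)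
  qed
  note G = this
  then have "integrable M (\<lambda>\<omega>. F (\<lambda>i\<in>{..<t}. incr c h i \<omega>))" by (simp add: F_incr)
  note transform = integral_mult_exp_incr[OF assms(1-3) F this, unfolded F_incr]
  have split: "\<phi> \<omega> * (exp (\<alpha> * walk c h (Suc t) \<omega>) - exp (\<alpha> * walk c h t \<omega>))
      = \<phi> \<omega> * exp (\<alpha> * walk c h t \<omega>) * exp (\<alpha> * incr c h t \<omega>) - \<phi> \<omega> * exp (\<alpha> * walk c h t \<omega>)" for \<omega>
    by (simp add: walk_Suc distrib_left right_diff_distrib exp_add mult.assoc)
  show "integrable M (\<lambda>\<omega>. \<phi> \<omega> * (exp (\<alpha> * walk c h (Suc t) \<omega>) - exp (\<alpha> * walk c h t \<omega>)))"
    unfolding split using transform(1) G by (rule Bochner_Integration.integrable_diff)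
  show "integral\<^sup>L M (\<lambda>\<omega>. \<phi> \<omega> * (exp (\<alpha> * walk c h (Suc t) \<omega>) - exp (\<alpha> * walk c h t \<omega>))) = 0"
    unfolding split using transform G by simp
qed

lemma doob_LlogL_walk_truncated:
  assumes "0 \<le> c" "0 < K" "h = 1 / real K" "0 \<le> L"
    and int: "integrable M (\<lambda>\<omega>. xlogx_plus (exp (\<alpha> * X (real m * h) \<omega>)))"
  shows "(1 - exp (-1)) * integral\<^sup>L M (\<lambda>\<omega>. min (run_max (\<lambda>j. exp (\<alpha> * walk c h j \<omega>)) m) (exp L))
     \<le> 1 + integral\<^sup>L M (\<lambda>\<omega>. xlogx_plus (exp (\<alpha> * X (real m * h) \<omega>)))"
proof -
  have h: "0 \<le> h" using assms by simp
  have [measurable]: "walk c h j \<in> borel_measurable M" for j using assms h by measurable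
  define \<Phi> where "\<Phi> t \<omega> = min (ln (run_max (\<lambda>j. exp (\<alpha> * walk c h j \<omega>)) t)) L
      * (exp (\<alpha> * walk c h (Suc t) \<omega>) - exp (\<alpha> * walk c h t \<omega>))" for t \<omega>
  have \<Phi>: "integrable M (\<Phi> t)" "integral\<^sup>L M (\<Phi> t) = 0" for t
    unfolding \<Phi>_def[abs_def] by (fact integral_truncated_log_transform_eq_0[OF assms(1-4)])+
  have same_distr:
    "integrable M (\<lambda>\<omega>. xlogx_plus (exp (\<alpha> * walk c h m \<omega>)))
       \<longleftrightarrow> integrable M (\<lambda>\<omega>. xlogx_plus (exp (\<alpha> * X (real m * h) \<omega>)))"
    "integral\<^sup>L M (\<lambda>\<omega>. xlogx_plus (exp (\<alpha> * walk c h m \<omega>)))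
       = integral\<^sup>L M (\<lambda>\<omega>. xlogx_plus (exp (\<alpha> * X (real m * h) \<omega>)))"
    using identically_distributed_integral[OF distr_increment[of c "real m * h"],
        of "\<lambda>x. xlogx_plus (exp (\<alpha> * x))"] \<open>0 \<le> c\<close> h
    by (simp_all add: walk_def)
  have xlogx_int: "integrable M (\<lambda>\<omega>. xlogx_plus (exp (\<alpha> * walk c h m \<omega>)))"
    using same_distr(1) int by simp
  have "(1 - exp (-1)) * integral\<^sup>L M (\<lambda>\<omega>. min (run_max (\<lambda>j. exp (\<alpha> * walk c h j \<omega>)) m) (exp L))
      = integral\<^sup>L M (\<lambda>\<omega>. (1 - exp (-1)) * min (run_max (\<lambda>j. exp (\<alpha> * walk c h j \<omega>)) m) (exp L))"
    by simp
  also have "\<dots> \<le> integral\<^sup>L M (\<lambda>\<omega>. 1 + xlogx_plus (exp (\<alpha> * walk c h m \<omega>)) - (\<Sum>t<m. \<Phi> t \<omega>))"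
  proof (rule integral_mono)
    show "integrable M (\<lambda>\<omega>. (1 - exp (-1)) * min (run_max (\<lambda>j. exp (\<alpha> * walk c h j \<omega>)) m) (exp L))"
    proof -
      have "\<bar>min (run_max (\<lambda>j. exp (\<alpha> * walk c h j \<omega>)) m) (exp L)\<bar> \<le> exp L" for \<omega>
        using one_le_run_max_exp_walk[of c h \<omega> m] by (simp add: abs_le_iff min_def)
      then show ?thesis
        by (intro integrable_mult_right integrable_const_bound[where B="exp L"] AE_I2) auto
    qed
    show "integrable M (\<lambda>\<omega>. 1 + xlogx_plus (exp (\<alpha> * walk c h m \<omega>)) - (\<Sum>t<m. \<Phi> t \<omega>))"
      using xlogx_int \<Phi>(1) by auto
    show "(1 - exp (-1)) * min (run_max (\<lambda>j. exp (\<alpha> * walk c h j \<omega>)) m) (exp L)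
        \<le> 1 + xlogx_plus (exp (\<alpha> * walk c h m \<omega>)) - (\<Sum>t<m. \<Phi> t \<omega>)" for \<omega>
      unfolding \<Phi>_def by (rule doob_LlogL_pathwise) (simp_all add: \<open>0 \<le> L\<close>)
  qed
  also have "\<dots> = 1 + integral\<^sup>L M (\<lambda>\<omega>. xlogx_plus (exp (\<alpha> * X (real m * h) \<omega>)))"
    using xlogx_int \<Phi> same_distr(2) by (simp add: prob_space)
  finally show ?thesis .
qed

lemma doob_LlogL_walk:
  assumes "0 \<le> c" "0 < K" "h = 1 / real K"
    and int: "integrable M (\<lambda>\<omega>. xlogx_plus (exp (\<alpha> * X (real m * h) \<omega>)))"
  shows "integrable M (\<lambda>\<omega>. run_max (\<lambda>j. exp (\<alpha> * walk c h j \<omega>)) m)"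
    and "(1 - exp (-1)) * integral\<^sup>L M (\<lambda>\<omega>. run_max (\<lambda>j. exp (\<alpha> * walk c h j \<omega>)) m)
       \<le> 1 + integral\<^sup>L M (\<lambda>\<omega>. xlogx_plus (exp (\<alpha> * X (real m * h) \<omega>)))"
proof -
  define R where "R \<omega> = run_max (\<lambda>j. exp (\<alpha> * walk c h j \<omega>)) m" for \<omega>
  show R: "integrable M (\<lambda>\<omega>. run_max (\<lambda>j. exp (\<alpha> * walk c h j \<omega>)) m)"
    by (intro integrable_run_max integrable_exp_walk[OF assms(1-3)])
  have R1: "1 \<le> R \<omega>" for \<omega> by (simp add: R_def one_le_run_max_exp_walk)
  have "(\<lambda>n. integral\<^sup>L M (\<lambda>\<omega>. min (R \<omega>) (exp (real n)))) \<longlonglongrightarrow> integral\<^sup>L M R"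
  proof (rule integral_dominated_convergence[where w=R])
    show "AE \<omega> in M. (\<lambda>n. min (R \<omega>) (exp (real n))) \<longlonglongrightarrow> R \<omega>"
    proof (intro AE_I2 tendsto_eventually eventually_sequentiallyI)
      fix \<omega> n assume "nat \<lceil>R \<omega>\<rceil> \<le> n"
      then have "R \<omega> \<le> exp (real n)" using exp_ge_add_one_self[of "real n"] by linarith
      then show "min (R \<omega>) (exp (real n)) = R \<omega>" by simp
    qed
    have "norm (min (R \<omega>) (exp (real n))) \<le> R \<omega>" for \<omega> n
      using R1[of \<omega>] by (simp add: abs_le_iff min_def)
    then show "AE \<omega> in M. norm (min (R \<omega>) (exp (real n))) \<le> R \<omega>" for n by simp
  qed (use R in \<open>auto simp: R_def[abs_def]\<close>)
  moreover have "(1 - exp (-1)) * integral\<^sup>L M (\<lambda>\<omega>. min (R \<omega>) (exp (real n)))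
      \<le> 1 + integral\<^sup>L M (\<lambda>\<omega>. xlogx_plus (exp (\<alpha> * X (real m * h) \<omega>)))" for n
    unfolding R_def by (rule doob_LlogL_walk_truncated[OF assms(1-3) _ int]) simp
  ultimately show "(1 - exp (-1)) * integral\<^sup>L M (\<lambda>\<omega>. run_max (\<lambda>j. exp (\<alpha> * walk c h j \<omega>)) m)
       \<le> 1 + integral\<^sup>L M (\<lambda>\<omega>. xlogx_plus (exp (\<alpha> * X (real m * h) \<omega>)))"
    unfolding R_def by (intro LIMSEQ_le_const2[OF tendsto_mult_left]) auto
qed

definition tilted_mean :: real where
  "tilted_mean = integral\<^sup>L M (\<lambda>\<omega>. X 1 \<omega> * exp (\<alpha> * X 1 \<omega>))"

text \<open>Writing \<open>X N\<close> as the sum of the \<open>N\<close> unit increments \<open>D\<^sub>i\<close>, the product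
  \<open>X N exp (\<alpha> X N)\<close> is the sum over \<open>j\<close> of \<open>D\<^sub>j exp (\<alpha> D\<^sub>j) \<Prod>\<^sub>i\<^sub>\<noteq>\<^sub>j exp (\<alpha> D\<^sub>i)\<close>,
  and each summand has mean \<open>tilted_mean\<close> by independence.\<close>
lemma integral_X_exp_X_nat:
  shows "integrable M (\<lambda>\<omega>. X (real N) \<omega> * exp (\<alpha> * X (real N) \<omega>))"
    and "integral\<^sup>L M (\<lambda>\<omega>. X (real N) \<omega> * exp (\<alpha> * X (real N) \<omega>)) = real N * tilted_mean"
proof -
  note same_distr = identically_distributed_integral[OF distr_incr[of 0 1]]
  have exp_incr: "integrable M (\<lambda>\<omega>. exp (\<alpha> * incr 0 1 i \<omega>))"
      "integral\<^sup>L M (\<lambda>\<omega>. exp (\<alpha> * incr 0 1 i \<omega>)) = 1" for i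
    using same_distr[of i "\<lambda>x. exp (\<alpha> * x)"] integrable_exp_X_1 integral_exp_X_1 by simp_all
  have tilted_incr: "integrable M (\<lambda>\<omega>. incr 0 1 i \<omega> * exp (\<alpha> * incr 0 1 i \<omega>))"
      "integral\<^sup>L M (\<lambda>\<omega>. incr 0 1 i \<omega> * exp (\<alpha> * incr 0 1 i \<omega>)) = tilted_mean" for i
    using same_distr[of i "\<lambda>x. x * exp (\<alpha> * x)"] integrable_X_exp_X_1
    by (simp_all add: tilted_mean_def)
  define Z where "Z j i \<omega> = (if i = j then incr 0 1 i \<omega> else 1) * exp (\<alpha> * incr 0 1 i \<omega>)" for j i \<omega>
  have indep: "indep_vars (\<lambda>_. borel) (Z j) {..<N}" for j
    unfolding Z_def
    by (rule indep_vars_compose2[where Y="\<lambda>i x. (if i = j then x else 1) * exp (\<alpha> * x)",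
          OF indep_vars_incr]) auto
  have Z: "integrable M (Z j i)" for i j
    unfolding Z_def by (cases "i = j") (use exp_incr tilted_incr in auto)
  have prod_Z: "integrable M (\<lambda>\<omega>. \<Prod>i<N. Z j i \<omega>)" for j
    by (rule indep_vars_integrable[OF _ indep]) (auto intro: Z)
  have integral_prod_Z: "integral\<^sup>L M (\<lambda>\<omega>. \<Prod>i<N. Z j i \<omega>) = tilted_mean" if "j < N" for j
  proof -
    have "integral\<^sup>L M (\<lambda>\<omega>. \<Prod>i<N. Z j i \<omega>) = (\<Prod>i<N. integral\<^sup>L M (Z j i))"
      by (rule indep_vars_lebesgue_integral[OF _ indep]) (auto intro: Z)
    also have "\<dots> = (\<Prod>i<N. if i = j then tilted_mean else 1)"
      by (intro prod.cong) (auto simp: Z_def[abs_def] exp_incr tilted_incr)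
    finally show ?thesis using that by simp
  qed
  have sum_Z: "X (real N) \<omega> * exp (\<alpha> * X (real N) \<omega>) = (\<Sum>j<N. \<Prod>i<N. Z j i \<omega>)"
    if "\<omega> \<in> space M" for \<omega>
  proof -
    have XN: "X (real N) \<omega> = (\<Sum>i<N. incr 0 1 i \<omega>)"
      using walk_eq_sum_incr[of 0 1 N \<omega>] X_0[OF that] by (simp add: walk_def)
    have "(\<Prod>i<N. Z j i \<omega>) = incr 0 1 j \<omega> * (\<Prod>i<N. exp (\<alpha> * incr 0 1 i \<omega>))" if "j < N" for j
      using that by (simp add: Z_def prod.distrib)
    then show ?thesis
      by (simp add: XN sum_distrib_left sum_distrib_right exp_sum)
  qed
  show "integrable M (\<lambda>\<omega>. X (real N) \<omega> * exp (\<alpha> * X (real N) \<omega>))"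
    using prod_Z by (subst Bochner_Integration.integrable_cong[OF refl sum_Z]) auto
  have "integral\<^sup>L M (\<lambda>\<omega>. X (real N) \<omega> * exp (\<alpha> * X (real N) \<omega>))
      = integral\<^sup>L M (\<lambda>\<omega>. \<Sum>j<N. \<Prod>i<N. Z j i \<omega>)"
    by (rule Bochner_Integration.integral_cong) (simp_all add: sum_Z)
  also have "\<dots> = real N * tilted_mean"
    using prod_Z by (simp add: integral_prod_Z)
  finally show "integral\<^sup>L M (\<lambda>\<omega>. X (real N) \<omega> * exp (\<alpha> * X (real N) \<omega>)) = real N * tilted_mean" .
qed

lemma integral_xlogx_plus_exp_X_nat:
  shows "integrable M (\<lambda>\<omega>. xlogx_plus (exp (\<alpha> * X (real N) \<omega>)))"
    and "integral\<^sup>L M (\<lambda>\<omega>. xlogx_plus (exp (\<alpha> * X (real N) \<omega>))) \<le> \<alpha> * (real N * tilted_mean) + exp (-1)"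
proof -
  note moment = integral_X_exp_X_nat[of N]
  show int: "integrable M (\<lambda>\<omega>. xlogx_plus (exp (\<alpha> * X (real N) \<omega>)))"
  proof (rule Bochner_Integration.integrable_bound[OF
        integrable_mult_right[OF integrable_abs[OF moment(1)], of \<alpha>]])
    show "AE \<omega> in M. norm (xlogx_plus (exp (\<alpha> * X (real N) \<omega>)))
        \<le> norm (\<alpha> * \<bar>X (real N) \<omega> * exp (\<alpha> * X (real N) \<omega>)\<bar>)"
    proof (intro AE_I2)
      fix \<omega>
      show "norm (xlogx_plus (exp (\<alpha> * X (real N) \<omega>))) \<le> norm (\<alpha> * \<bar>X (real N) \<omega> * exp (\<alpha> * X (real N) \<omega>)\<bar>)"
        using abs_xlogx_plus_exp_le[of "\<alpha> * X (real N) \<omega>"] \<alpha>_pos by (simp add: abs_mult mult.assoc)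
    qed
  qed measurable
  have "integral\<^sup>L M (\<lambda>\<omega>. xlogx_plus (exp (\<alpha> * X (real N) \<omega>)))
      \<le> integral\<^sup>L M (\<lambda>\<omega>. \<alpha> * (X (real N) \<omega> * exp (\<alpha> * X (real N) \<omega>)) + exp (-1))"
  proof (rule integral_mono[OF int])
    show "integrable M (\<lambda>\<omega>. \<alpha> * (X (real N) \<omega> * exp (\<alpha> * X (real N) \<omega>)) + exp (-1))"
      using moment(1) by simp
    show "xlogx_plus (exp (\<alpha> * X (real N) \<omega>)) \<le> \<alpha> * (X (real N) \<omega> * exp (\<alpha> * X (real N) \<omega>)) + exp (-1)"
      for \<omega> using xlogx_plus_exp_le[of "\<alpha> * X (real N) \<omega>"] by (simp add: mult.assoc)
  qed
  also have "\<dots> = \<alpha> * (real N * tilted_mean) + exp (-1)"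
    using moment by (simp add: prob_space)
  finally show "integral\<^sup>L M (\<lambda>\<omega>. xlogx_plus (exp (\<alpha> * X (real N) \<omega>))) \<le> \<alpha> * (real N * tilted_mean) + exp (-1)" .
qed

definition growth_const :: real where
  "growth_const = (1 + exp (-1) + \<alpha> * \<bar>tilted_mean\<bar>) / (1 - exp (-1))"

lemma growth_const_pos: "0 < growth_const"
  using \<alpha>_pos by (simp add: growth_const_def add_pos_nonneg)

lemma integral_run_max_exp_walk_le:
  assumes "0 \<le> c"
  shows "integrable M (\<lambda>\<omega>. run_max (\<lambda>j. exp (\<alpha> * walk c (1 / 2 ^ n) j \<omega>)) (b * 2 ^ n))"
    and "integral\<^sup>L M (\<lambda>\<omega>. run_max (\<lambda>j. exp (\<alpha> * walk c (1 / 2 ^ n) j \<omega>)) (b * 2 ^ n))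
       \<le> growth_const * (1 + real b)"
proof -
  have K: "0 < (2::nat) ^ n" "(1 / 2 ^ n :: real) = 1 / real ((2::nat) ^ n)" by simp_all
  have time: "real (b * 2 ^ n) * (1 / 2 ^ n) = real b" by simp
  note doob = doob_LlogL_walk[OF assms K, of "b * 2 ^ n", unfolded time,
      OF integral_xlogx_plus_exp_X_nat(1)]
  show "integrable M (\<lambda>\<omega>. run_max (\<lambda>j. exp (\<alpha> * walk c (1 / 2 ^ n) j \<omega>)) (b * 2 ^ n))"
    by (rule doob(1))
  have "\<alpha> * (real b * tilted_mean) \<le> \<alpha> * \<bar>tilted_mean\<bar> * real b"
    using \<alpha>_pos by (simp add: mult_left_mono mult.commute mult.left_commute abs_ge_self)
  moreover have "0 \<le> (1 + exp (-1)) * real b" "0 \<le> \<alpha> * \<bar>tilted_mean\<bar>" using \<alpha>_pos by simp_all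
  moreover have "(1 + exp (-1) + \<alpha> * \<bar>tilted_mean\<bar>) * (1 + real b)
      = 1 + exp (-1) + \<alpha> * \<bar>tilted_mean\<bar> + (1 + exp (-1)) * real b + \<alpha> * \<bar>tilted_mean\<bar> * real b"
    by (simp add: algebra_simps)
  ultimately have "(1 - exp (-1)) * integral\<^sup>L M (\<lambda>\<omega>. run_max (\<lambda>j. exp (\<alpha> * walk c (1 / 2 ^ n) j \<omega>)) (b * 2 ^ n))
      \<le> (1 + exp (-1) + \<alpha> * \<bar>tilted_mean\<bar>) * (1 + real b)"
    using doob(2) integral_xlogx_plus_exp_X_nat(2)[of b] by linarith
  then show "integral\<^sup>L M (\<lambda>\<omega>. run_max (\<lambda>j. exp (\<alpha> * walk c (1 / 2 ^ n) j \<omega>)) (b * 2 ^ n))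
      \<le> growth_const * (1 + real b)"
    by (simp add: growth_const_def field_simps)
qed

lemma exp_dyadic_max_nat:
  "\<omega> \<in> space M \<Longrightarrow>
    exp (\<alpha> * dyadic_max n (real N) \<omega>) = run_max (\<lambda>j. exp (\<alpha> * walk 0 (1 / 2 ^ n) j \<omega>)) (N * 2 ^ n)"
  using dyadic_max_nat run_max_exp[of \<alpha>] \<alpha>_pos by simp

lemma exp_dyadic_max_tendsto:
  "\<omega> \<in> space M \<Longrightarrow> 0 \<le> T \<Longrightarrow>
    (\<lambda>n. exp (\<alpha> * dyadic_max n T \<omega>)) \<longlonglongrightarrow> exp (\<alpha> * running_sup X T \<omega>)"
  by (intro tendsto_exp tendsto_mult_left dyadic_max_tendsto_running_sup)

lemma integral_exp_running_sup_nat_le: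
  shows "integrable M (\<lambda>\<omega>. exp (\<alpha> * running_sup X (real N) \<omega>))"
    and "integral\<^sup>L M (\<lambda>\<omega>. exp (\<alpha> * running_sup X (real N) \<omega>)) \<le> growth_const * (1 + real N)"
proof -
  define u where "u n \<omega> = exp (\<alpha> * dyadic_max n (real N) \<omega>)" for n \<omega>
  have u: "integrable M (u n)" "integral\<^sup>L M (u n) \<le> growth_const * (1 + real N)" for n
    using integral_run_max_exp_walk_le[of 0 n N]
    by (simp_all add: u_def[abs_def] exp_dyadic_max_nat cong: Bochner_Integration.integrable_cong
        Bochner_Integration.integral_cong)
  have u_mono: "u n \<omega> \<le> u (Suc n) \<omega>" for n \<omega>
    unfolding u_def using dyadic_max_le_Suc \<alpha>_pos by (simp add: mult_left_mono)
  have "(\<lambda>n. integral\<^sup>L M (u n)) \<longlonglongrightarrow> (SUP n. integral\<^sup>L M (u n))"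
    using u(2) by (intro LIMSEQ_incseq_SUP incseq_SucI integral_mono u(1) u_mono bdd_aboveI2) auto
  note mono_conv = integral_monotone_convergence_nonneg[OF u(1) _ _ _ this]
  have conds: "AE \<omega> in M. mono (\<lambda>n. u n \<omega>)" "AE \<omega> in M. 0 \<le> u n \<omega>"
      "AE \<omega> in M. (\<lambda>n. u n \<omega>) \<longlonglongrightarrow> exp (\<alpha> * running_sup X (real N) \<omega>)" for n
    using u_mono exp_dyadic_max_tendsto by (auto simp: u_def mono_iff_le_Suc)
  show "integrable M (\<lambda>\<omega>. exp (\<alpha> * running_sup X (real N) \<omega>))"
    using mono_conv(1)[OF conds] by simp
  have "integral\<^sup>L M (\<lambda>\<omega>. exp (\<alpha> * running_sup X (real N) \<omega>)) = (SUP n. integral\<^sup>L M (u n))"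
    using mono_conv(2)[OF conds] by simp
  also have "\<dots> \<le> growth_const * (1 + real N)" using u(2) by (intro cSUP_least) auto
  finally show "integral\<^sup>L M (\<lambda>\<omega>. exp (\<alpha> * running_sup X (real N) \<omega>)) \<le> growth_const * (1 + real N)" .
qed

lemma integrable_exp_running_sup: "0 \<le> s \<Longrightarrow> integrable M (\<lambda>\<omega>. exp (\<alpha> * running_sup X s \<omega>))"
proof (rule Bochner_Integration.integrable_bound[OF integral_exp_running_sup_nat_le(1)[of "nat \<lceil>s\<rceil>"]])
  assume "0 \<le> s"
  then show "AE \<omega> in M. norm (exp (\<alpha> * running_sup X s \<omega>))
      \<le> norm (exp (\<alpha> * running_sup X (real (nat \<lceil>s\<rceil>)) \<omega>))"
    using running_sup_mono[of _ s "real (nat \<lceil>s\<rceil>)"] \<alpha>_pos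
    by (intro AE_I2) (simp add: mult_left_mono real_nat_ceiling_ge)
qed simp

lemma integral_exp_run_max_walk_split:
  fixes p q :: nat
  assumes "0 < K" "h = 1 / real K"
  defines "A \<equiv> \<lambda>\<omega>. run_max (\<lambda>k. walk 0 h k \<omega>) p"
    and "B \<equiv> \<lambda>\<omega>. run_max (\<lambda>j. walk (real p * h) h j \<omega>) q"
  shows "integrable M (\<lambda>\<omega>. exp (\<alpha> * A \<omega>) * exp (\<alpha> * B \<omega>))"
    and "integral\<^sup>L M (\<lambda>\<omega>. exp (\<alpha> * A \<omega>) * exp (\<alpha> * B \<omega>))
       = integral\<^sup>L M (\<lambda>\<omega>. exp (\<alpha> * A \<omega>)) * integral\<^sup>L M (\<lambda>\<omega>. exp (\<alpha> * B \<omega>))"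
proof -
  have h: "0 \<le> h" using assms by simp
  have shift: "incr 0 h (p + i) \<omega> = incr (real p * h) h i \<omega>" for i \<omega>
    by (simp add: incr_def algebra_simps)
  define F where "F v = exp (\<alpha> * run_max (\<lambda>k. \<Sum>i<k. v i) p)" for v :: "nat \<Rightarrow> real"
  define G where "G v = exp (\<alpha> * run_max (\<lambda>j. \<Sum>i<j. v (p + i)) q)" for v :: "nat \<Rightarrow> real"
  have "F \<in> borel_measurable (PiM {..<p} (\<lambda>_. borel))"
    unfolding F_def using borel_measurable_prefix_sum by measurable
  moreover have "G \<in> borel_measurable (PiM {p..<p + q} (\<lambda>_. borel))"
    unfolding G_def using borel_measurable_block_sum by measurable
  ultimately have indep: "indep_var borel (\<lambda>\<omega>. F (\<lambda>i\<in>{..<p}. incr 0 h i \<omega>))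
      borel (\<lambda>\<omega>. G (\<lambda>i\<in>{p..<p + q}. incr 0 h i \<omega>))"
    using h by (intro indep_var_incr_blocks) auto
  have FA: "F (\<lambda>i\<in>{..<p}. incr 0 h i \<omega>) = exp (\<alpha> * A \<omega>)" for \<omega>
    by (auto simp: F_def A_def walk_eq_sum_incr intro!: run_max_cong)
  have GB: "G (\<lambda>i\<in>{p..<p + q}. incr 0 h i \<omega>) = exp (\<alpha> * B \<omega>)" for \<omega>
    by (auto simp: G_def B_def walk_eq_sum_incr shift intro!: run_max_cong)
  have "exp (\<alpha> * A \<omega>) = run_max (\<lambda>k. exp (\<alpha> * walk 0 h k \<omega>)) p"
    "exp (\<alpha> * B \<omega>) = run_max (\<lambda>j. exp (\<alpha> * walk (real p * h) h j \<omega>)) q" for \<omega>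
    using run_max_exp[of \<alpha>] \<alpha>_pos by (simp_all add: A_def B_def)
  then have "integrable M (\<lambda>\<omega>. exp (\<alpha> * A \<omega>))" "integrable M (\<lambda>\<omega>. exp (\<alpha> * B \<omega>))"
    using assms h by (simp_all add: integrable_run_max integrable_exp_walk)
  then have "integrable M (\<lambda>\<omega>. F (\<lambda>i\<in>{..<p}. incr 0 h i \<omega>))"
    "integrable M (\<lambda>\<omega>. G (\<lambda>i\<in>{p..<p + q}. incr 0 h i \<omega>))" by (simp_all add: FA GB)
  from indep_var_integrable[OF indep this] indep_var_lebesgue_integral[OF indep this]
  show "integrable M (\<lambda>\<omega>. exp (\<alpha> * A \<omega>) * exp (\<alpha> * B \<omega>))"
    and "integral\<^sup>L M (\<lambda>\<omega>. exp (\<alpha> * A \<omega>) * exp (\<alpha> * B \<omega>))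
       = integral\<^sup>L M (\<lambda>\<omega>. exp (\<alpha> * A \<omega>)) * integral\<^sup>L M (\<lambda>\<omega>. exp (\<alpha> * B \<omega>))"
    by (simp_all add: FA GB)
qed

lemma integral_exp_dyadic_max_add_le:
  fixes a b :: nat
  shows "integral\<^sup>L M (\<lambda>\<omega>. exp (\<alpha> * dyadic_max n (real (a + b)) \<omega>))
     \<le> integral\<^sup>L M (\<lambda>\<omega>. exp (\<alpha> * running_sup X (real a) \<omega>)) * (growth_const * (1 + real b))"
proof -
  define h :: real where "h = 1 / 2 ^ n"
  have K: "0 < (2::nat) ^ n" "h = 1 / real ((2::nat) ^ n)" by (simp_all add: h_def)
  have a: "real (a * 2 ^ n) * h = real a" by (simp add: h_def)
  define A where "A \<omega> = run_max (\<lambda>k. walk 0 h k \<omega>) (a * 2 ^ n)" for \<omega>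
  define B where "B \<omega> = run_max (\<lambda>j. walk (real a) h j \<omega>) (b * 2 ^ n)" for \<omega>
  note split = integral_exp_run_max_walk_split[OF K, of "a * 2 ^ n" "b * 2 ^ n", unfolded a,
      folded A_def B_def]
  have "integral\<^sup>L M (\<lambda>\<omega>. exp (\<alpha> * dyadic_max n (real (a + b)) \<omega>))
      \<le> integral\<^sup>L M (\<lambda>\<omega>. exp (\<alpha> * A \<omega>) * exp (\<alpha> * B \<omega>))"
  proof (rule integral_mono[OF _ split(1)])
    show "integrable M (\<lambda>\<omega>. exp (\<alpha> * dyadic_max n (real (a + b)) \<omega>))"
      using integral_run_max_exp_walk_le(1)[of 0 n "a + b"]
      by (subst Bochner_Integration.integrable_cong[OF refl exp_dyadic_max_nat]) auto
    fix \<omega> assume "\<omega> \<in> space M"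
    then have "\<alpha> * dyadic_max n (real (a + b)) \<omega> \<le> \<alpha> * A \<omega> + \<alpha> * B \<omega>"
      using dyadic_max_add_le[of \<omega> n a b] \<alpha>_pos
      by (simp add: A_def B_def h_def flip: distrib_left)
    then show "exp (\<alpha> * dyadic_max n (real (a + b)) \<omega>) \<le> exp (\<alpha> * A \<omega>) * exp (\<alpha> * B \<omega>)"
      by (simp flip: exp_add)
  qed
  also have "\<dots> = integral\<^sup>L M (\<lambda>\<omega>. exp (\<alpha> * A \<omega>)) * integral\<^sup>L M (\<lambda>\<omega>. exp (\<alpha> * B \<omega>))"
    by (rule split(2))
  also have "\<dots> \<le> integral\<^sup>L M (\<lambda>\<omega>. exp (\<alpha> * running_sup X (real a) \<omega>)) * (growth_const * (1 + real b))"
  proof (rule mult_mono)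
    show "integral\<^sup>L M (\<lambda>\<omega>. exp (\<alpha> * A \<omega>)) \<le> integral\<^sup>L M (\<lambda>\<omega>. exp (\<alpha> * running_sup X (real a) \<omega>))"
    proof (rule integral_mono[OF _ integrable_exp_running_sup])
      show "integrable M (\<lambda>\<omega>. exp (\<alpha> * A \<omega>))"
        using integral_run_max_exp_walk_le(1)[of 0 n a] run_max_exp[of \<alpha>] \<alpha>_pos
        by (simp add: A_def h_def)
      show "exp (\<alpha> * A \<omega>) \<le> exp (\<alpha> * running_sup X (real a) \<omega>)" if "\<omega> \<in> space M" for \<omega>
        using dyadic_max_le_running_sup[OF that, of "real a" n] dyadic_max_nat[OF that, of n a] \<alpha>_pos
        by (simp add: A_def h_def)
    qed simp
    show "integral\<^sup>L M (\<lambda>\<omega>. exp (\<alpha> * B \<omega>)) \<le> growth_const * (1 + real b)"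
      using integral_run_max_exp_walk_le(2)[of "real a" n b] run_max_exp[of \<alpha>] \<alpha>_pos
      by (simp add: B_def h_def)
  qed auto
  finally show ?thesis .
qed

lemma integral_exp_running_sup_add_le:
  fixes a b :: nat
  shows "integral\<^sup>L M (\<lambda>\<omega>. exp (\<alpha> * running_sup X (real (a + b)) \<omega>))
     \<le> integral\<^sup>L M (\<lambda>\<omega>. exp (\<alpha> * running_sup X (real a) \<omega>)) * (growth_const * (1 + real b))"
proof (rule LIMSEQ_le_const2)
  show "(\<lambda>n. integral\<^sup>L M (\<lambda>\<omega>. exp (\<alpha> * dyadic_max n (real (a + b)) \<omega>)))
      \<longlonglongrightarrow> integral\<^sup>L M (\<lambda>\<omega>. exp (\<alpha> * running_sup X (real (a + b)) \<omega>))"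
  proof (rule integral_dominated_convergence[OF _ _ integrable_exp_running_sup])
    show "AE \<omega> in M. norm (exp (\<alpha> * dyadic_max n (real (a + b)) \<omega>))
        \<le> exp (\<alpha> * running_sup X (real (a + b)) \<omega>)" for n
      using dyadic_max_le_running_sup[of _ "real (a + b)" n] \<alpha>_pos by (intro AE_I2) simp
  qed (simp_all add: exp_dyadic_max_tendsto)
qed (use integral_exp_dyadic_max_add_le in auto)

text \<open>The integrand of \<open>levy_B\<close>; the clamp at \<open>0\<close> avoids the junk value of the running
  supremum over the empty interval \<open>{0..s}\<close>, \<open>s < 0\<close>.\<close>
definition sup_mgf :: "real \<Rightarrow> real" where
  "sup_mgf s = integral\<^sup>L M (\<lambda>\<omega>. exp (\<alpha> * running_sup X (max s 0) \<omega>))"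

lemma mono_sup_mgf: "mono sup_mgf"
proof (rule monoI)
  fix s t :: real assume "s \<le> t"
  then show "sup_mgf s \<le> sup_mgf t"
    unfolding sup_mgf_def using running_sup_mono[of _ "max s 0" "max t 0"] \<alpha>_pos
    by (intro integral_mono integrable_exp_running_sup) (auto simp: mult_left_mono)
qed

lemma one_le_sup_mgf: "1 \<le> sup_mgf s"
proof -
  have "integral\<^sup>L M (\<lambda>\<omega>. 1 :: real) \<le> sup_mgf s"
    unfolding sup_mgf_def using running_sup_nonneg[of _ "max s 0"] \<alpha>_pos
    by (intro integral_mono integrable_exp_running_sup) auto
  then show ?thesis by (simp add: prob_space)
qed

lemma sup_mgf_add_le: "sup_mgf (real (a + b)) \<le> sup_mgf (real a) * (growth_const * (1 + real b))"
  using integral_exp_running_sup_add_le[of a b] by (simp add: sup_mgf_def)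

lemma levy_B_eq_sup_mgf: "levy_B M X \<alpha> T = (LINT s:{0..<T}|lborel. sup_mgf s)"
proof -
  have "levy_psi M X \<alpha> = 0" using integral_exp_X_1 by (simp add: levy_psi_def)
  then show ?thesis
    unfolding levy_B_def by (intro set_lebesgue_integral_cong) (auto simp: sup_mgf_def)
qed

end

theorem lemma7p1:
  fixes M :: "'a measure" and X :: "real \<Rightarrow> 'a \<Rightarrow> real" and \<alpha> t :: real
  assumes "levy_process M X"
    and "\<alpha> > 0"
    and "integrable M (\<lambda>\<omega>. exp (\<alpha> * X 1 \<omega>))"
    and "integral\<^sup>L M (\<lambda>\<omega>. exp (\<alpha> * X 1 \<omega>)) = 1"
    and "integrable M (\<lambda>\<omega>. X 1 \<omega> * exp (\<alpha> * X 1 \<omega>))"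
    and "t \<ge> 0"
  shows "((\<lambda>T. levy_B M X \<alpha> (T - t) / levy_B M X \<alpha> T) \<longlongrightarrow> 1) at_top"
proof -
  interpret cramer_levy M X \<alpha>
    using assms by (simp add: cramer_levy_def cramer_levy_axioms_def levy_def)
  show ?thesis
    unfolding levy_B_eq_sup_mgf
    using set_integral_Ico_ratio_tendsto_1[OF mono_sup_mgf one_le_sup_mgf sup_mgf_add_le
        growth_const_pos \<open>t \<ge> 0\<close>] .
qed

end
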